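(* If a metric space $(X,d)$ threshold-embeds into $L_2$, then for every $\varepsilon\in(0,1)$ the metric space $(X,d^{1-\varepsilon})$ admits a bi-Lipschitz embedding into a Hilbert space.
   Context: For a metric $d$ and $\theta\in(0,1]$, $d^\theta$ denotes the metric $d^\theta(x,y)=d(x,y)^\theta$. Threshold embedding: $(X,d_X)$ $K$-threshold-embeds into $(Y,d_Y)$ if there is a family of Lipschitz maps $\{\varphi_\tau:X\to Y\}_{\tau>0}$ such that for every $\tau>0$ and all $x,y\in X$, $d_X(x,y)\ge\tau$ implies $d_Y(\varphi_\tau(x),\varphi_\tau(y))\ge \|\varphi_\tau\|_{\mathrm{Lip}}\,\tau/K$; $X$ threshold-embeds into $Y$ if this holds for some $K>0$. *)

theory Defs
  imports "HOL-Analysis.Analysis"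
begin

definition metric_on :: "'a set \<Rightarrow> ('a \<Rightarrow> 'a \<Rightarrow> real) \<Rightarrow> bool" where
  "metric_on X d \<longleftrightarrow>
     (\<forall>x\<in>X. \<forall>y\<in>X. 0 \<le> d x y \<and> (d x y = 0 \<longleftrightarrow> x = y) \<and> d x y = d y x) \<and>
     (\<forall>x\<in>X. \<forall>y\<in>X. \<forall>z\<in>X. d x z \<le> d x y + d y z)"

definition snowflake :: "('a \<Rightarrow> 'a \<Rightarrow> real) \<Rightarrow> real \<Rightarrow> 'a \<Rightarrow> 'a \<Rightarrow> real" where
  "snowflake d \<theta> = (\<lambda>x y. d x y powr \<theta>)"

definition lipschitz_wrt :: "'a set \<Rightarrow> ('a \<Rightarrow> 'a \<Rightarrow> real) \<Rightarrow> ('a \<Rightarrow> 'b::metric_space) \<Rightarrow> bool" where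
  "lipschitz_wrt X d f \<longleftrightarrow> (\<exists>C. \<forall>x\<in>X. \<forall>y\<in>X. dist (f x) (f y) \<le> C * d x y)"

definition lip_norm :: "'a set \<Rightarrow> ('a \<Rightarrow> 'a \<Rightarrow> real) \<Rightarrow> ('a \<Rightarrow> 'b::metric_space) \<Rightarrow> real" where
  "lip_norm X d f = Inf {C. 0 \<le> C \<and> (\<forall>x\<in>X. \<forall>y\<in>X. dist (f x) (f y) \<le> C * d x y)}"

definition threshold_embeds_K ::
  "'a set \<Rightarrow> ('a \<Rightarrow> 'a \<Rightarrow> real) \<Rightarrow> real \<Rightarrow> (real \<Rightarrow> 'a \<Rightarrow> 'b::metric_space) \<Rightarrow> bool" where
  "threshold_embeds_K X d K \<phi> \<longleftrightarrow>
     (\<forall>\<tau>>0. lipschitz_wrt X d (\<phi> \<tau>) \<and> lip_norm X d (\<phi> \<tau>) > 0 \<and>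
        (\<forall>x\<in>X. \<forall>y\<in>X. d x y \<ge> \<tau> \<longrightarrow>
            dist (\<phi> \<tau> x) (\<phi> \<tau> y) \<ge> lip_norm X d (\<phi> \<tau>) * \<tau> / K))"

definition threshold_embeds :: "'a set \<Rightarrow> ('a \<Rightarrow> 'a \<Rightarrow> real) \<Rightarrow> 'b::metric_space itself \<Rightarrow> bool" where
  "threshold_embeds X d T \<longleftrightarrow>
     (\<exists>K>0. \<exists>\<phi> :: real \<Rightarrow> 'a \<Rightarrow> 'b. threshold_embeds_K X d K \<phi>)"

definition ell2 :: "('i \<Rightarrow> real) set" where
  "ell2 = {f. (\<lambda>i. (f i)\<^sup>2) summable_on UNIV}"

definition ell2_dist :: "('i \<Rightarrow> real) \<Rightarrow> ('i \<Rightarrow> real) \<Rightarrow> real" where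
  "ell2_dist f g = sqrt (\<Sum>\<^sub>\<infinity>i. (f i - g i)\<^sup>2)"

definition bilipschitz_into_ell2 ::
  "'a set \<Rightarrow> ('a \<Rightarrow> 'a \<Rightarrow> real) \<Rightarrow> ('a \<Rightarrow> 'i \<Rightarrow> real) \<Rightarrow> bool" where
  "bilipschitz_into_ell2 X \<rho> f \<longleftrightarrow>
     (\<forall>x\<in>X. f x \<in> ell2) \<and>
     (\<exists>c C. 0 < c \<and> (\<forall>x\<in>X. \<forall>y\<in>X. c * \<rho> x y \<le> ell2_dist (f x) (f y) \<and>
                                       ell2_dist (f x) (f y) \<le> C * \<rho> x y))"

end

theory Submission
  imports Defs "HOL-Library.Countable"
begin

text \<open>
  From a \<open>K\<close>-threshold embedding \<open>\<phi>\<close> of \<open>(X,d)\<close> into a Hilbert space, divide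
  \<open>\<phi>(2^k)\<close> by its Lipschitz norm: this gives, for every \<open>k \<in> \<int>\<close>, a 1-Lipschitz map \<open>\<psi>_k\<close> with
  \<open>|\<psi>_k x - \<psi>_k y| \<ge> 2^k/K\<close> whenever \<open>d x y \<ge> 2^k\<close>.  The Gaussian feature map \<open>\<Phi>\<close> sends the
  Hilbert space into a sequence space with \<open>|\<Phi> u - \<Phi> v|^2 = 2 - 2 exp (-|u - v|^2/2)\<close>.  The
  level-\<open>k\<close> map \<open>x \<mapsto> 2^(k(1-\<epsilon>)) \<Phi>(\<psi>_k x / 2^k)\<close> then contributes at most
  \<open>min (2 \<cdot> 4^(k(1-\<epsilon>))) (d^2 \<cdot> 4^(-k\<epsilon>))\<close> to the squared distance of \<open>x, y\<close>, and at least a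
  constant times \<open>d^(2(1-\<epsilon>))\<close> at the scale \<open>2^k \<approx> d\<close>.  Summing over all \<open>k\<close> (two geometric
  series) gives squared distances comparable to \<open>d^(2(1-\<epsilon>))\<close>, i.e. a bi-Lipschitz embedding
  of the snowflake \<open>d^(1-\<epsilon>)\<close>.
\<close>

section \<open>Orthonormal sets, Bessel's inequality and Parseval's identity\<close>

definition orthonormal_set :: "'h::real_inner set \<Rightarrow> bool" where
  "orthonormal_set B \<longleftrightarrow>
     (\<forall>b\<in>B. norm b = 1) \<and> (\<forall>b\<in>B. \<forall>c\<in>B. b \<noteq> c \<longrightarrow> inner b c = 0)"

lemma orthonormal_set_inner:
  "orthonormal_set B \<Longrightarrow> b \<in> B \<Longrightarrow> c \<in> B \<Longrightarrow> inner b c = (if b = c then 1 else 0)"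
  unfolding orthonormal_set_def by (auto simp: dot_square_norm)

lemma orthonormal_norm_sum:
  assumes "orthonormal_set B" "finite F" "F \<subseteq> B"
  shows "(norm (\<Sum>c\<in>F. a c *\<^sub>R c))\<^sup>2 = (\<Sum>c\<in>F. (a c)\<^sup>2)"
proof -
  have coeff: "inner (\<Sum>c\<in>F. a c *\<^sub>R c) b = a b" if "b \<in> F" for b
  proof -
    have "inner (\<Sum>c\<in>F. a c *\<^sub>R c) b = (\<Sum>c\<in>F. if c = b then a c else 0)"
      unfolding inner_sum_left
      using assms that by (intro sum.cong) (auto simp: orthonormal_set_inner subset_iff)
    then show ?thesis using assms(2) that by (simp add: sum.delta')
  qed
  have "(norm (\<Sum>c\<in>F. a c *\<^sub>R c))\<^sup>2 = (\<Sum>b\<in>F. a b * inner (\<Sum>c\<in>F. a c *\<^sub>R c) b)"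
    by (simp add: dot_square_norm[symmetric] inner_sum_right)
  also have "\<dots> = (\<Sum>b\<in>F. (a b)\<^sup>2)"
    by (intro sum.cong) (auto simp: coeff power2_eq_square)
  finally show ?thesis .
qed

lemma bessel_inequality:
  assumes "orthonormal_set B" "finite F" "F \<subseteq> B"
  shows "(\<Sum>b\<in>F. (inner u b)\<^sup>2) \<le> (norm u)\<^sup>2"
proof -
  define s where "s = (\<Sum>c\<in>F. inner u c *\<^sub>R c)"
  have us: "inner u s = (\<Sum>b\<in>F. (inner u b)\<^sup>2)"
    unfolding s_def by (simp add: inner_sum_right power2_eq_square)
  have ss: "inner s s = (\<Sum>b\<in>F. (inner u b)\<^sup>2)"
    using orthonormal_norm_sum[OF assms, of "inner u"] by (simp add: s_def dot_square_norm)
  have "0 \<le> inner (u - s) (u - s)" by simp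
  also have "\<dots> = inner u u - 2 * inner u s + inner s s"
    by (simp add: inner_diff_left inner_diff_right inner_commute)
  finally show ?thesis using us ss by (simp add: dot_square_norm)
qed

lemma coeff_sq_summable:
  assumes "orthonormal_set B"
  shows "(\<lambda>b. (inner u b)\<^sup>2) summable_on B"
  by (rule nonneg_bdd_above_summable_on)
     (use bessel_inequality[OF assms] in \<open>auto intro!: bdd_aboveI[where M="(norm u)\<^sup>2"]\<close>)

lemma sum_le_has_sum:
  fixes f :: "'a \<Rightarrow> real"
  assumes "(f has_sum s) A" "finite F" "F \<subseteq> A" "\<And>x. x \<in> A \<Longrightarrow> f x \<ge> 0"
  shows "sum f F \<le> s"
  using has_sum_mono_neutral[OF has_sum_finiteI[OF assms(2) refl] assms(1)] assms by auto

lemma summable_on_if_tails_small: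
  fixes f :: "'i \<Rightarrow> 'v::{real_normed_vector, complete_space}"
  assumes small: "\<And>e. e > 0 \<Longrightarrow> \<exists>F0. finite F0 \<and> F0 \<subseteq> A \<and>
             (\<forall>F. finite F \<and> F0 \<subseteq> F \<and> F \<subseteq> A \<longrightarrow> norm (sum f F - sum f F0) < e)"
  shows "f summable_on A"
proof -
  have "\<exists>P. eventually P (finite_subsets_at_top A) \<and>
          (\<forall>F F'. P F \<and> P F' \<longrightarrow> dist (sum f F) (sum f F') < e)" if "e > 0" for e
  proof -
    obtain F0 where F0: "finite F0" "F0 \<subseteq> A"
      and tail: "\<And>F. finite F \<and> F0 \<subseteq> F \<and> F \<subseteq> A \<Longrightarrow> norm (sum f F - sum f F0) < e / 2"
      using small[of "e / 2"] \<open>e > 0\<close> by auto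
    define P where "P F \<longleftrightarrow> finite F \<and> F0 \<subseteq> F \<and> F \<subseteq> A" for F
    have "eventually P (finite_subsets_at_top A)"
      unfolding P_def eventually_finite_subsets_at_top using F0 by blast
    moreover have "dist (sum f F) (sum f F') < e" if "P F" "P F'" for F F'
    proof -
      have "dist (sum f F) (sum f F') \<le> norm (sum f F - sum f F0) + norm (sum f F' - sum f F0)"
        using dist_triangle3[of "sum f F" "sum f F'" "sum f F0"]
        by (simp add: dist_norm norm_minus_commute)
      moreover have "norm (sum f F - sum f F0) < e / 2" "norm (sum f F' - sum f F0) < e / 2"
        using tail that unfolding P_def by blast+
      ultimately show ?thesis by linarith
    qed
    ultimately show ?thesis by blast
  qed
  then have "cauchy_filter (filtermap (sum f) (finite_subsets_at_top A))"
    by (simp add: cauchy_filter_metric_filtermap)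
  moreover have "complete (UNIV :: 'v set)"
    by (meson Cauchy_convergent UNIV_I complete_def convergent_def)
  ultimately obtain L where "(sum f \<longlongrightarrow> L) (finite_subsets_at_top A)"
    using complete_uniform[where S=UNIV] by (force simp add: filterlim_def)
  then show ?thesis using summable_on_def has_sum_def by blast
qed

lemma fourier_series_summable:
  fixes u :: "'h::{real_inner, complete_space}"
  assumes on: "orthonormal_set B"
  shows "(\<lambda>b. inner u b *\<^sub>R b) summable_on B"
proof (rule summable_on_if_tails_small)
  fix e :: real assume "e > 0"
  define Q where "Q b = (inner u b)\<^sup>2" for b
  obtain \<sigma> where hs: "(Q has_sum \<sigma>) B"
    using coeff_sq_summable[OF on] unfolding Q_def summable_on_def by blast
  obtain F0 where F0: "finite F0" "F0 \<subseteq> B" "dist (sum Q F0) \<sigma> \<le> e\<^sup>2 / 2"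
    using has_sum_finite_approximation[OF hs, of "e\<^sup>2 / 2"] \<open>e > 0\<close> by auto
  have "norm (sum (\<lambda>b. inner u b *\<^sub>R b) F - sum (\<lambda>b. inner u b *\<^sub>R b) F0) < e"
    if F: "finite F" "F0 \<subseteq> F" "F \<subseteq> B" for F
  proof -
    have "(norm (sum (\<lambda>b. inner u b *\<^sub>R b) F - sum (\<lambda>b. inner u b *\<^sub>R b) F0))\<^sup>2
          = (norm (sum (\<lambda>b. inner u b *\<^sub>R b) (F - F0)))\<^sup>2"
      using F by (simp add: sum_diff)
    also have "\<dots> = sum Q (F - F0)"
      unfolding Q_def using F by (intro orthonormal_norm_sum[OF on]) auto
    also have "\<dots> = sum Q F - sum Q F0"
      using F by (simp add: sum_diff)
    also have "\<dots> \<le> \<sigma> - sum Q F0"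
      using sum_le_has_sum[OF hs F(1,3)] by (simp add: Q_def)
    also have "\<dots> \<le> e\<^sup>2 / 2"
      using F0(3) unfolding dist_real_def by linarith
    also have "\<dots> < e\<^sup>2"
      using \<open>e > 0\<close> by simp
    finally show ?thesis
      by (rule power2_less_imp_less) (use \<open>e > 0\<close> in simp)
  qed
  then show "\<exists>F0. finite F0 \<and> F0 \<subseteq> B \<and> (\<forall>F. finite F \<and> F0 \<subseteq> F \<and> F \<subseteq> B \<longrightarrow>
      norm (sum (\<lambda>b. inner u b *\<^sub>R b) F - sum (\<lambda>b. inner u b *\<^sub>R b) F0) < e)"
    using F0 by blast
qed

text \<open>Maximal orthonormal sets play the role of Hilbert bases.\<close>
definition maximal_orthonormal :: "'h::real_inner set \<Rightarrow> bool" where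
  "maximal_orthonormal B \<longleftrightarrow> orthonormal_set B \<and> (\<forall>C. orthonormal_set C \<and> B \<subseteq> C \<longrightarrow> C = B)"

lemma maximal_orthonormal_exists: "\<exists>B::'h::real_inner set. maximal_orthonormal B"
proof -
  have "\<exists>M\<in>{B::'h set. orthonormal_set B}. \<forall>X\<in>{B. orthonormal_set B}. M \<subseteq> X \<longrightarrow> X = M"
  proof (rule Zorn_Lemma, intro ballI)
    fix C assume "C \<in> chains {B::'h set. orthonormal_set B}"
    then have chain: "chain\<^sub>\<subseteq> C" and sub: "C \<subseteq> {B. orthonormal_set B}"
      by (auto simp: chains_def)
    show "\<Union>C \<in> {B. orthonormal_set B}"
      unfolding mem_Collect_eq orthonormal_set_def
    proof safe
      fix b Y assume "b \<in> Y" "Y \<in> C"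
      then show "norm b = 1" using sub by (auto simp: orthonormal_set_def)
    next
      fix b c Y Z assume h: "b \<in> Y" "Y \<in> C" "c \<in> Z" "Z \<in> C" "b \<noteq> c"
      from chain h(2,4) have "Y \<subseteq> Z \<or> Z \<subseteq> Y" by (auto simp: chain_subset_def)
      moreover from sub h have "orthonormal_set Y" "orthonormal_set Z" by auto
      ultimately show "inner b c = 0" using h unfolding orthonormal_set_def by blast
    qed
  qed
  then show ?thesis unfolding maximal_orthonormal_def by blast
qed

lemma fourier_series_coeffs:
  assumes on: "orthonormal_set B" and hw: "((\<lambda>c. inner u c *\<^sub>R c) has_sum w) B" and b: "b \<in> B"
  shows "inner w b = inner u b"
proof -
  have "((\<lambda>c. inner (inner u c *\<^sub>R c) b) has_sum inner w b) B"
    by (rule has_sum_bounded_linear[OF bounded_linear_inner_left hw])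
  moreover have "((\<lambda>c. inner (inner u c *\<^sub>R c) b) has_sum inner u b) B"
  proof -
    have "((\<lambda>c. inner (inner u c *\<^sub>R c) b) has_sum inner u b) {b}"
      using b on by (intro has_sum_finiteI) (auto simp: orthonormal_set_def dot_square_norm)
    then show ?thesis
      by (subst (asm) has_sum_cong_neutral[where T=B]) (use b on in \<open>auto simp: orthonormal_set_inner\<close>)
  qed
  ultimately show ?thesis using has_sum_unique by blast
qed

text \<open>Only the zero vector is orthogonal to a maximal orthonormal set: otherwise its
  normalisation would extend the set.\<close>
lemma maximal_orthonormal_total:
  assumes max: "maximal_orthonormal B" and orth: "\<And>b. b \<in> B \<Longrightarrow> inner v b = 0"
  shows "v = 0"
proof (rule ccontr)
  assume "v \<noteq> 0"
  define v' where "v' = (1 / norm v) *\<^sub>R v"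
  have nv': "norm v' = 1" using \<open>v \<noteq> 0\<close> by (simp add: v'_def)
  have orth': "inner v' b = 0" if "b \<in> B" for b
    using orth[OF that] by (simp add: v'_def)
  have "v' \<notin> B"
  proof
    assume "v' \<in> B"
    then have "inner v' v' = 0" using orth' by blast
    then show False using nv' by simp
  qed
  moreover have "orthonormal_set (insert v' B)"
    using max nv' orth' unfolding maximal_orthonormal_def orthonormal_set_def
    by (auto simp: inner_commute)
  then have "insert v' B = B" using max unfolding maximal_orthonormal_def by blast
  ultimately show False by blast
qed

text \<open>Parseval's identity for a maximal orthonormal set in a Hilbert space: the Fourier series
  of \<open>u\<close> converges to some \<open>w\<close> with the same coefficients, so \<open>u - w\<close> is orthogonal to \<open>B\<close>.\<close>
lemma parseval:
  fixes u :: "'h::{real_inner, complete_space}"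
  assumes max: "maximal_orthonormal B"
  shows "((\<lambda>b. (inner u b)\<^sup>2) has_sum (norm u)\<^sup>2) B"
proof -
  have on: "orthonormal_set B" using max by (simp add: maximal_orthonormal_def)
  define w where "w = infsum (\<lambda>b. inner u b *\<^sub>R b) B"
  have hw: "((\<lambda>b. inner u b *\<^sub>R b) has_sum w) B"
    unfolding w_def using fourier_series_summable[OF on] by (simp add: summable_iff_has_sum_infsum)
  have "u - w = 0"
    using fourier_series_coeffs[OF on hw] by (intro maximal_orthonormal_total[OF max])
       (simp add: inner_diff_left)
  moreover have "((\<lambda>b. inner u (inner u b *\<^sub>R b)) has_sum inner u w) B"
    by (rule has_sum_bounded_linear[OF bounded_linear_inner_right hw])
  ultimately show ?thesis by (simp add: power2_eq_square power2_norm_eq_inner[symmetric])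
qed

section \<open>The Gaussian feature map\<close>

text \<open>A product of square-summable families is summable (by \<open>\<bar>xy\<bar> \<le> (x\<^sup>2 + y\<^sup>2)/2\<close>).\<close>
lemma product_summable:
  fixes a c :: "'j \<Rightarrow> real"
  assumes as: "(\<lambda>j. (a j)\<^sup>2) summable_on J" and cs: "(\<lambda>j. (c j)\<^sup>2) summable_on J"
  shows "(\<lambda>j. a j * c j) summable_on J"
proof -
  have "(\<lambda>j. ((a j)\<^sup>2 + (c j)\<^sup>2) * (1/2)) summable_on J"
    by (rule summable_on_cmult_left[OF summable_on_add[OF as cs]])
  moreover have "norm (a j * c j) \<le> ((a j)\<^sup>2 + (c j)\<^sup>2) * (1/2)" for j
    using sum_squares_bound[of "\<bar>a j\<bar>" "\<bar>c j\<bar>"] by (simp add: abs_mult)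
  ultimately have "(\<lambda>j. norm (a j * c j)) summable_on J"
    by (rule summable_on_comparison_test) auto
  then show ?thesis using summable_on_iff_abs_summable_on_real by blast
qed

lemma prod_PiE_nonneg_summable:
  fixes h :: "'j \<Rightarrow> real" and n :: nat
  assumes hs: "(h has_sum H) J" and nn: "\<And>j. j \<in> J \<Longrightarrow> h j \<ge> 0"
  shows "(\<lambda>g. \<Prod>i<n. h (g i)) summable_on PiE {..<n} (\<lambda>_. J)"
proof (rule nonneg_bdd_above_summable_on)
  show "0 \<le> (\<Prod>i<n. h (g i))" if "g \<in> PiE {..<n} (\<lambda>_. J)" for g
    using that nn by (intro prod_nonneg) auto
  show "bdd_above (sum (\<lambda>g. \<Prod>i<n. h (g i)) ` {F. F \<subseteq> PiE {..<n} (\<lambda>_. J) \<and> finite F})"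
  proof (rule bdd_aboveI2)
    fix F assume F: "F \<in> {F. F \<subseteq> PiE {..<n} (\<lambda>_. J) \<and> finite F}"
    define G where "G = (\<Union>g\<in>F. g ` {..<n})"
    have finG: "finite G" using F unfolding G_def by (intro finite_UN_I) auto
    have GJ: "G \<subseteq> J" using F by (auto simp: G_def PiE_iff)
    have FG: "F \<subseteq> PiE {..<n} (\<lambda>_. G)" using F by (auto simp: G_def PiE_iff)
    have "sum (\<lambda>g. \<Prod>i<n. h (g i)) F \<le> sum (\<lambda>g. \<Prod>i<n. h (g i)) (PiE {..<n} (\<lambda>_. G))"
      by (rule sum_mono2)
         (use finG FG GJ nn in \<open>auto intro!: finite_PiE prod_nonneg simp: PiE_iff subset_iff\<close>)
    also have "\<dots> = (\<Prod>i<n. \<Sum>y\<in>G. h y)"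
      by (subst prod_sum_PiE) (use finG in auto)
    also have "\<dots> = (sum h G) ^ n" by simp
    also have "\<dots> \<le> H ^ n"
      using sum_le_has_sum[OF hs finG GJ nn] GJ nn by (intro power_mono sum_nonneg) auto
    finally show "sum (\<lambda>g. \<Prod>i<n. h (g i)) F \<le> H ^ n" .
  qed
qed

lemma prod_PiE_has_sum:
  fixes q :: "'j \<Rightarrow> real" and n :: nat
  assumes qs: "q summable_on J"
  shows "((\<lambda>g. \<Prod>i<n. q (g i)) has_sum (infsum q J) ^ n) (PiE {..<n} (\<lambda>_. J))"
proof -
  have aq: "(\<lambda>j. norm (q j)) summable_on J"
    using qs summable_on_iff_abs_summable_on_real by blast
  have "(\<lambda>g. \<Prod>i<n. norm (q (g i))) summable_on PiE {..<n} (\<lambda>_. J)"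
    by (rule prod_PiE_nonneg_summable[OF aq[unfolded summable_iff_has_sum_infsum]]) auto
  then have "(\<lambda>g. norm (\<Prod>i<n. q (g i))) summable_on PiE {..<n} (\<lambda>_. J)"
    by (simp add: abs_prod)
  then have "(\<lambda>g. \<Prod>i<n. q (g i)) summable_on PiE {..<n} (\<lambda>_. J)"
    using summable_on_iff_abs_summable_on_real by blast
  moreover have "infsum (\<lambda>g. \<Prod>i<n. q (g i)) (PiE {..<n} (\<lambda>_. J)) = (\<Prod>i<n. infsum q J)"
    by (rule infsum_prod_PiE_abs[where f="\<lambda>_. q", simplified]) (use aq in auto)
  ultimately show ?thesis by (simp add: summable_iff_has_sum_infsum)
qed

lemma exp_has_sum: "((\<lambda>n. x ^ n / fact n) has_sum exp (x::real)) UNIV"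
proof -
  have "((\<lambda>n. x ^ n /\<^sub>R fact n) has_sum exp x) UNIV"
    by (rule norm_summable_imp_has_sum[OF summable_norm_exp exp_converges])
  then show ?thesis by (simp add: divide_inverse mult.commute)
qed

text \<open>They index the
  coordinates of the symmetric Fock space over \<open>\<ell>\<^sub>2(J)\<close>.\<close>
definition words :: "'j set \<Rightarrow> (nat \<times> (nat \<Rightarrow> 'j)) set" where
  "words J = Sigma UNIV (\<lambda>n. PiE {..<n} (\<lambda>_. J))"

text \<open>The exponential series over words:
  \<open>\<Sum>(n,g). (\<Prod>i<n. q (g i)) / n! = \<Sum>n. (\<Sum>q)^n / n! = exp (\<Sum>q)\<close>.\<close>
lemma exp_words_has_sum:
  fixes q :: "'j \<Rightarrow> real"
  assumes qs: "q summable_on J"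
  shows "((\<lambda>(n, g). (\<Prod>i<n. q (g i)) / fact n) has_sum exp (infsum q J)) (words J)"
proof -
  have level: "((\<lambda>g. (\<Prod>i<n. r (g i)) / fact n) has_sum (infsum r J) ^ n / fact n)
                 (PiE {..<n} (\<lambda>_. J))" if "r summable_on J" for r :: "'j \<Rightarrow> real" and n
    using has_sum_cmult_left[OF prod_PiE_has_sum[OF that, of n], of "1 / fact n"] by simp
  have aq: "(\<lambda>j. \<bar>q j\<bar>) summable_on J"
    using qs summable_on_iff_abs_summable_on_real by auto
  have "(\<lambda>(n, g). (\<Prod>i<n. \<bar>q (g i)\<bar>) / fact n) summable_on words J"
    unfolding words_def
  proof (rule summable_on_SigmaI[where g="\<lambda>n. (infsum (\<lambda>j. \<bar>q j\<bar>) J) ^ n / fact n"])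
    show "((\<lambda>g. (\<lambda>(n, g). (\<Prod>i<n. \<bar>q (g i)\<bar>) / fact n) (n, g)) has_sum
            (infsum (\<lambda>j. \<bar>q j\<bar>) J) ^ n / fact n) (PiE {..<n} (\<lambda>_. J))" for n
      using level[OF aq, of n] by simp
  qed (use exp_has_sum in \<open>auto intro!: divide_nonneg_pos prod_nonneg has_sum_imp_summable\<close>)
  then have "(\<lambda>p. norm ((\<lambda>(n, g). (\<Prod>i<n. q (g i)) / fact n) p)) summable_on words J"
    by (auto simp: case_prod_unfold abs_prod)
  then have "(\<lambda>(n, g). (\<Prod>i<n. q (g i)) / fact n) summable_on words J"
    using summable_on_iff_abs_summable_on_real by blast
  then show ?thesis
    unfolding words_def by (intro has_sum_SigmaI[OF _ exp_has_sum]) (simp_all add: level[OF qs])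
qed

text \<open>The coordinates \<open>a^\<otimes>n / sqrt n!\<close> of the tensor exponential of \<open>a \<in> \<ell>\<^sub>2(J)\<close>; their inner
  product is \<open>exp \<langle>a, c\<rangle>\<close>.\<close>
definition tensor_coord :: "('j \<Rightarrow> real) \<Rightarrow> nat \<times> (nat \<Rightarrow> 'j) \<Rightarrow> real" where
  "tensor_coord a = (\<lambda>(n, g). (\<Prod>i<n. a (g i)) / sqrt (fact n))"

lemma tensor_coord_inner_has_sum:
  fixes a c :: "'j \<Rightarrow> real"
  assumes "(\<lambda>j. (a j)\<^sup>2) summable_on J" "(\<lambda>j. (c j)\<^sup>2) summable_on J"
  shows "((\<lambda>p. tensor_coord a p * tensor_coord c p) has_sum exp (infsum (\<lambda>j. a j * c j) J))
           (words J)"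
proof -
  have "tensor_coord a p * tensor_coord c p = (\<lambda>(n, g). (\<Prod>i<n. a (g i) * c (g i)) / fact n) p"
    for p
    by (cases p) (simp add: tensor_coord_def prod.distrib)
  then show ?thesis
    using exp_words_has_sum[OF product_summable[OF assms]] by simp
qed

text \<open>The squared feature distance as a function of the squared distance \<open>t\<close>: it is monotone,
  at most \<open>t\<close>, and saturates at \<open>2\<close>; these are the only properties used below.\<close>
definition gauss_gap :: "real \<Rightarrow> real" where
  "gauss_gap t = 2 - 2 * exp (- t / 2)"

lemma gauss_gap_le_two: "gauss_gap t \<le> 2"
  by (simp add: gauss_gap_def)

lemma gauss_gap_le: "gauss_gap t \<le> t"
  using exp_ge_add_one_self[of "- t / 2"] by (simp add: gauss_gap_def)

lemma gauss_gap_mono: "s \<le> t \<Longrightarrow> gauss_gap s \<le> gauss_gap t"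
  by (simp add: gauss_gap_def)

lemma gauss_gap_pos: "t > 0 \<Longrightarrow> gauss_gap t > 0"
  by (simp add: gauss_gap_def)

lemma gauss_gap_nonneg: "t \<ge> 0 \<Longrightarrow> gauss_gap t \<ge> 0"
  by (simp add: gauss_gap_def)

definition gauss_feature :: "'j set \<Rightarrow> ('j \<Rightarrow> real) \<Rightarrow> nat \<times> (nat \<Rightarrow> 'j) \<Rightarrow> real" where
  "gauss_feature J a p = exp (- infsum (\<lambda>j. (a j)\<^sup>2) J / 2) * tensor_coord a p"

text \<open>Expanding the square, the three resulting sums are \<open>exp\<close> of the inner products
  \<open>\<langle>a,a\<rangle>, \<langle>c,c\<rangle>, \<langle>a,c\<rangle>\<close>, which combine to \<open>2 - 2 exp (-|a - c|^2/2)\<close>.\<close>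
lemma gauss_feature_dist_has_sum:
  fixes a c :: "'j \<Rightarrow> real"
  assumes as: "(\<lambda>j. (a j)\<^sup>2) summable_on J" and cs: "(\<lambda>j. (c j)\<^sup>2) summable_on J"
  shows "((\<lambda>p. (gauss_feature J a p - gauss_feature J c p)\<^sup>2) has_sum
           gauss_gap (infsum (\<lambda>j. (a j - c j)\<^sup>2) J)) (words J)"
proof -
  define A where "A = infsum (\<lambda>j. (a j)\<^sup>2) J"
  define C where "C = infsum (\<lambda>j. (c j)\<^sup>2) J"
  define P where "P = infsum (\<lambda>j. a j * c j) J"
  have "((\<lambda>j. (a j)\<^sup>2 + (c j)\<^sup>2 + (-2) * (a j * c j)) has_sum A + C + (-2) * P) J"
    using as cs product_summable[OF as cs]
    by (intro has_sum_add has_sum_cmult_right) (auto simp: A_def C_def P_def)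
  then have "infsum (\<lambda>j. (a j - c j)\<^sup>2) J = A + C - 2 * P"
    by (intro infsumI) (simp add: power2_eq_square algebra_simps)
  moreover have "((\<lambda>p. exp (- A) * (tensor_coord a p * tensor_coord a p)
        + exp (- C) * (tensor_coord c p * tensor_coord c p)
        + (-2 * exp (- A / 2) * exp (- C / 2)) * (tensor_coord a p * tensor_coord c p))
      has_sum exp (- A) * exp A + exp (- C) * exp C + (-2 * exp (- A / 2) * exp (- C / 2)) * exp P)
      (words J)"
    using tensor_coord_inner_has_sum[OF as as] tensor_coord_inner_has_sum[OF cs cs]
      tensor_coord_inner_has_sum[OF as cs]
    by (intro has_sum_add has_sum_cmult_right) (simp_all add: A_def C_def P_def power2_eq_square)
  moreover have "(gauss_feature J a p - gauss_feature J c p)\<^sup>2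
      = exp (- A) * (tensor_coord a p * tensor_coord a p)
        + exp (- C) * (tensor_coord c p * tensor_coord c p)
        + (-2 * exp (- A / 2) * exp (- C / 2)) * (tensor_coord a p * tensor_coord c p)" for p
  proof -
    have "exp (- A) = exp (- A / 2) * exp (- A / 2)" "exp (- C) = exp (- C / 2) * exp (- C / 2)"
      by (simp_all add: exp_add[symmetric])
    then show ?thesis
      unfolding gauss_feature_def A_def[symmetric] C_def[symmetric]
      by (simp add: power2_eq_square algebra_simps)
  qed
  moreover have "exp (- A) * exp A + exp (- C) * exp C + (-2 * exp (- A / 2) * exp (- C / 2)) * exp P
      = 2 - 2 * exp (- (A + C - 2 * P) / 2)"
    by (simp add: exp_add[symmetric] exp_minus_inverse field_simps)
  ultimately show ?thesis by (simp add: gauss_gap_def)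
qed

section \<open>Two-sided dyadic geometric sums\<close>

lemma dyadic_bracket:
  fixes d :: real
  assumes "d > 0"
  obtains m :: int where "2 powr m \<le> d" "d < 2 powr (m + 1)"
proof
  define m where "m = \<lfloor>log 2 d\<rfloor>"
  have "2 powr m \<le> 2 powr (log 2 d)" unfolding m_def by (intro powr_mono) auto
  then show "2 powr m \<le> d" using assms by simp
  have "2 powr (log 2 d) < 2 powr (m + 1)" unfolding m_def by (intro powr_less_mono) linarith+
  then show "d < 2 powr (m + 1)" using assms by simp
qed

lemma geometric_has_sum_upto:
  fixes \<alpha> :: real and m :: int
  assumes "\<alpha> > 0"
  shows "((\<lambda>k::int. 2 powr (\<alpha> * k)) has_sum 2 powr (\<alpha> * m) / (1 - 2 powr (- \<alpha>))) {..m}"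
proof -
  define r where "r = 2 powr (- \<alpha>)"
  have r: "0 \<le> r" "r < 1" using assms by (auto simp: r_def intro!: powr_less_one)
  have "((\<lambda>j::nat. r ^ j) has_sum 1 / (1 - r)) UNIV"
    by (rule sums_nonneg_imp_has_sum) (use r geometric_sums[of r] in auto)
  from has_sum_cmult_right[OF this, of "2 powr (\<alpha> * m)"]
  have "((\<lambda>j::nat. 2 powr (\<alpha> * m) * r ^ j) has_sum 2 powr (\<alpha> * m) / (1 - r)) UNIV" by simp
  moreover have "2 powr (\<alpha> * m) * r ^ j = 2 powr (\<alpha> * real_of_int (m - int j))" for j
    by (simp add: r_def powr_power powr_add[symmetric] algebra_simps)
  ultimately have "(((\<lambda>k::int. 2 powr (\<alpha> * k)) \<circ> (\<lambda>j. m - int j)) has_sum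
                    2 powr (\<alpha> * m) / (1 - r)) UNIV"
    by (simp add: o_def)
  moreover have "inj (\<lambda>j::nat. m - int j)" by (auto simp: inj_on_def)
  moreover have "range (\<lambda>j::nat. m - int j) = {..m}"
  proof (intro set_eqI iffI)
    fix k assume "k \<in> {..m}"
    then have "k = m - int (nat (m - k))" by auto
    then show "k \<in> range (\<lambda>j::nat. m - int j)" by blast
  qed auto
  ultimately show ?thesis using has_sum_reindex by (metis r_def)
qed

lemma geometric_has_sum_above:
  fixes \<beta> :: real and m :: int
  assumes "\<beta> > 0"
  shows "((\<lambda>k::int. 2 powr (- \<beta> * k)) has_sum 2 powr (- \<beta> * (m + 1)) / (1 - 2 powr (- \<beta>))) {m<..}"
proof -
  have "((\<lambda>k::int. 2 powr (\<beta> * k)) has_sum 2 powr (\<beta> * (- (m + 1))) / (1 - 2 powr (- \<beta>)))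
          {..- (m + 1)}"
    by (rule geometric_has_sum_upto[OF assms])
  moreover have "uminus ` {m<..} = {..- (m + 1)}" by (auto simp: image_uminus_greaterThan)
  moreover have "- \<beta> * (m + 1) = \<beta> * (- (m + 1))" by (simp add: algebra_simps)
  ultimately have "((\<lambda>k::int. 2 powr (\<beta> * k)) has_sum 2 powr (- \<beta> * (m + 1)) / (1 - 2 powr (- \<beta>)))
          (uminus ` {m<..})"
    by (simp only:)
  then have "(((\<lambda>k::int. 2 powr (\<beta> * k)) \<circ> uminus) has_sum
               2 powr (- \<beta> * (m + 1)) / (1 - 2 powr (- \<beta>))) {m<..}"
    by (rule has_sum_reindex[THEN iffD1, rotated]) (simp add: inj_on_def)
  then show ?thesis by (simp add: o_def)
qed

lemma dyadic_scale_powers: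
  fixes \<alpha> \<beta> d :: real and m :: int
  assumes ab: "\<alpha> > 0" "\<beta> > 0" "\<alpha> + \<beta> = 2" and m: "2 powr m \<le> d" "d < 2 powr (m + 1)"
  shows "2 powr (\<alpha> * m) \<le> d powr \<alpha>" and "d\<^sup>2 * 2 powr (- \<beta> * (m + 1)) \<le> d powr \<alpha>"
proof -
  have "0 < 2 powr m" by simp
  then have d: "d > 0" using m(1) by linarith
  have "2 powr (\<alpha> * m) = (2 powr m) powr \<alpha>" by (simp add: powr_powr mult.commute)
  also have "\<dots> \<le> d powr \<alpha>" by (rule powr_mono2) (use ab m in auto)
  finally show "2 powr (\<alpha> * m) \<le> d powr \<alpha>" .
  have "2 powr (- \<beta> * (m + 1)) = (2 powr (m + 1)) powr (- \<beta>)" by (simp add: powr_powr mult.commute)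
  also have "\<dots> \<le> d powr (- \<beta>)" by (rule powr_mono2') (use ab m d in auto)
  finally have "d\<^sup>2 * 2 powr (- \<beta> * (m + 1)) \<le> d powr 2 * d powr (- \<beta>)"
    using d by (simp add: powr_realpow' mult_left_mono)
  also have "\<dots> = d powr \<alpha>"
  proof -
    have "\<alpha> = 2 + - \<beta>" using ab by simp
    then show ?thesis by (simp only: powr_add)
  qed
  finally show "d\<^sup>2 * 2 powr (- \<beta> * (m + 1)) \<le> d powr \<alpha>" .
qed

text \<open>If \<open>0 \<le> t k \<le> min (2 \<cdot> 2^(\<alpha>k)) (d^2 \<cdot> 2^(-\<beta>k))\<close> with \<open>\<alpha> + \<beta> = 2\<close>, then \<open>\<Sum>k. t k\<close> is at
  most a constant times \<open>d^\<alpha>\<close>: use the first bound up to the scale \<open>2^m \<approx> d\<close> and the second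
  one above it.\<close>
lemma dyadic_sum_bound:
  fixes t :: "int \<Rightarrow> real" and \<alpha> \<beta> d :: real
  assumes ab: "\<alpha> > 0" "\<beta> > 0" "\<alpha> + \<beta> = 2" and d: "d > 0"
    and t0: "\<And>k. 0 \<le> t k" and t1: "\<And>k. t k \<le> 2 * 2 powr (\<alpha> * k)"
    and t2: "\<And>k. t k \<le> d\<^sup>2 * 2 powr (- \<beta> * k)"
  shows "t summable_on UNIV"
    and "infsum t UNIV \<le> (2 / (1 - 2 powr (- \<alpha>)) + 1 / (1 - 2 powr (- \<beta>))) * d powr \<alpha>"
proof -
  obtain m :: int where m: "2 powr m \<le> d" "d < 2 powr (m + 1)" using dyadic_bracket[OF d] .
  define h where "h k = (if k \<le> m then 2 * 2 powr (\<alpha> * k) else d\<^sup>2 * 2 powr (- \<beta> * k))" for k :: int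
  define S1 where "S1 = 2 * (2 powr (\<alpha> * m) / (1 - 2 powr (- \<alpha>)))"
  define S2 where "S2 = d\<^sup>2 * (2 powr (- \<beta> * (m + 1)) / (1 - 2 powr (- \<beta>)))"
  have "(h has_sum S1) {..m}"
  proof (rule has_sum_cong[THEN iffD2])
    show "((\<lambda>k. 2 * 2 powr (\<alpha> * k)) has_sum S1) {..m}"
      unfolding S1_def by (rule has_sum_cmult_right[OF geometric_has_sum_upto[OF ab(1)]])
  qed (simp add: h_def)
  moreover have "(h has_sum S2) {m<..}"
  proof (rule has_sum_cong[THEN iffD2])
    show "((\<lambda>k. d\<^sup>2 * 2 powr (- \<beta> * k)) has_sum S2) {m<..}"
      unfolding S2_def by (rule has_sum_cmult_right[OF geometric_has_sum_above[OF ab(2)]])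
  qed (simp add: h_def)
  ultimately have "(h has_sum (S1 + S2)) ({..m} \<union> {m<..})" by (rule has_sum_Un_disjoint) auto
  moreover have "{..m} \<union> {m<..} = (UNIV :: int set)" by auto
  ultimately have H: "(h has_sum (S1 + S2)) UNIV" by simp
  have th: "t k \<le> h k" for k using t1 t2 by (simp add: h_def)
  show ts: "t summable_on UNIV"
    by (rule summable_on_comparison_test[OF has_sum_imp_summable[OF H]]) (use th t0 in auto)
  have geo: "0 < 1 - 2 powr (- \<alpha>)" "0 < 1 - 2 powr (- \<beta>)"
    using ab by (auto intro!: powr_less_one)
  have "infsum t UNIV \<le> S1 + S2"
    using has_sum_mono[OF ts[unfolded summable_iff_has_sum_infsum] H] th by auto
  also have "S1 \<le> 2 / (1 - 2 powr (- \<alpha>)) * d powr \<alpha>"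
    unfolding S1_def using dyadic_scale_powers(1)[OF ab m] geo by (simp add: divide_right_mono)
  also have "S2 \<le> 1 / (1 - 2 powr (- \<beta>)) * d powr \<alpha>"
    unfolding S2_def using dyadic_scale_powers(2)[OF ab m] geo by (simp add: divide_right_mono)
  finally show "infsum t UNIV \<le> (2 / (1 - 2 powr (- \<alpha>)) + 1 / (1 - 2 powr (- \<beta>))) * d powr \<alpha>"
    by (simp add: algebra_simps)
qed

section \<open>Re-indexing the coordinates by \<open>'a \<times> nat\<close>\<close>

text \<open>A vector has only countably many nonzero coefficients against an orthonormal set, so the
  basis vectors seen by some \<open>v k x\<close> (with \<open>k\<close> ranging over a countable type and \<open>x \<in> X\<close>)
  can be labelled injectively by pairs \<open>(x, n)\<close>.\<close>
lemma seen_basis_encoding: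
  fixes v :: "'k::countable \<Rightarrow> 'a \<Rightarrow> 'h::real_inner"
  assumes on: "orthonormal_set B"
  shows "\<exists>e :: 'h \<Rightarrow> 'a \<times> nat. inj_on e {b\<in>B. \<exists>k. \<exists>x\<in>X. inner (v k x) b \<noteq> 0}"
proof -
  define supp where "supp kx = {b\<in>B. inner (v (fst kx) (snd kx)) b \<noteq> 0}" for kx
  have countable_supp: "countable (supp kx)" for kx
    using summable_countable_real[OF coeff_sq_summable[OF on, of "v (fst kx) (snd kx)"]]
    by (simp add: supp_def)
  define wit where "wit b = (SOME kx. snd kx \<in> X \<and> b \<in> supp kx)" for b
  have wit: "b \<in> supp (wit b)" if "b \<in> {b\<in>B. \<exists>k. \<exists>x\<in>X. inner (v k x) b \<noteq> 0}" for b
  proof -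
    from that have "\<exists>kx. snd kx \<in> X \<and> b \<in> supp kx" by (force simp: supp_def)
    then show ?thesis unfolding wit_def by (rule someI2_ex) blast
  qed
  define e where "e b = (snd (wit b), to_nat (fst (wit b), to_nat_on (supp (wit b)) b))" for b
  have "inj_on e {b\<in>B. \<exists>k. \<exists>x\<in>X. inner (v k x) b \<noteq> 0}"
  proof (rule inj_onI)
    fix b b' assume b: "b \<in> {b\<in>B. \<exists>k. \<exists>x\<in>X. inner (v k x) b \<noteq> 0}"
      and b': "b' \<in> {b\<in>B. \<exists>k. \<exists>x\<in>X. inner (v k x) b \<noteq> 0}" and eq: "e b = e b'"
    then have "snd (wit b) = snd (wit b')" "fst (wit b) = fst (wit b')"
      and idx: "to_nat_on (supp (wit b)) b = to_nat_on (supp (wit b')) b'"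
      by (auto simp: e_def)
    then have same: "wit b = wit b'" by (simp add: prod_eq_iff)
    have "inj_on (to_nat_on (supp (wit b'))) (supp (wit b'))"
      by (rule inj_on_to_nat_on[OF countable_supp])
    then show "b = b'"
      using wit[OF b] wit[OF b'] idx unfolding same by (auto dest: inj_onD)
  qed
  then show ?thesis by blast
qed

lemma infinite_pairing:
  assumes "infinite (UNIV :: 'c set)"
  shows "\<exists>q :: 'c \<times> 'c \<Rightarrow> 'c. inj q"
proof -
  obtain q where "bij_betw q (UNIV \<times> UNIV :: ('c \<times> 'c) set) (UNIV :: 'c set)"
    using card_of_ordIso card_of_Times_same_infinite[OF assms] by blast
  then show ?thesis by (auto simp: bij_betw_def)
qed

primrec word_code :: "('c \<times> 'c \<Rightarrow> 'c) \<Rightarrow> 'c \<Rightarrow> nat \<Rightarrow> (nat \<Rightarrow> 'c) \<Rightarrow> 'c" where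
  "word_code q z 0 g = z"
| "word_code q z (Suc n) g = q (g n, word_code q z n g)"

lemma word_code_inj:
  assumes "inj q"
  shows "word_code q z n g = word_code q z n g' \<Longrightarrow> i < n \<Longrightarrow> g i = g' i"
proof (induction n arbitrary: i)
  case (Suc n)
  have "(g n, word_code q z n g) = (g' n, word_code q z n g')"
    by (rule injD[OF assms]) (use Suc.prems(1) in simp)
  then show ?case using Suc.IH Suc.prems(2) less_Suc_eq by auto
qed simp

text \<open>The coordinates of the final embedding are indexed by a countable scale and a word over
  an index set \<open>J\<close>; if \<open>J\<close> embeds into \<open>'a \<times> nat\<close>, so does this index set.\<close>
lemma words_encoding:
  fixes e :: "'j \<Rightarrow> 'a \<times> nat"
  assumes e: "inj_on e J"
  shows "\<exists>cd :: 'k::countable \<times> nat \<times> (nat \<Rightarrow> 'j) \<Rightarrow> 'a \<times> nat. inj_on cd (UNIV \<times> words J)"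
proof -
  obtain q :: "('a \<times> nat) \<times> ('a \<times> nat) \<Rightarrow> 'a \<times> nat" where q: "inj q"
    using infinite_pairing[where 'c="'a \<times> nat"] by (auto simp: finite_prod)
  define cd where "cd = (\<lambda>(k :: 'k, n, g). q ((undefined, to_nat (k, n)), word_code q undefined n (e \<circ> g)))"
  have "inj_on cd (UNIV \<times> words J)"
  proof (rule inj_onI)
    fix x y assume x: "x \<in> UNIV \<times> words J" and y: "y \<in> UNIV \<times> words J" and "cd x = cd y"
    obtain k n g k' n' g' where xy: "x = (k, n, g)" "y = (k', n', g')" by (cases x, cases y) auto
    have w: "(n, g) \<in> words J" "(n', g') \<in> words J" and eq: "cd (k, n, g) = cd (k', n', g')"
      using x y \<open>cd x = cd y\<close> by (auto simp: xy)
    have "(((undefined :: 'a), to_nat (k, n)), word_code q undefined n (e \<circ> g))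
        = (((undefined :: 'a), to_nat (k', n')), word_code q undefined n' (e \<circ> g'))"
      by (rule injD[OF q]) (use eq in \<open>simp add: cd_def\<close>)
    then have "to_nat (k, n) = to_nat (k', n')"
      and codes: "word_code q undefined n (e \<circ> g) = word_code q undefined n' (e \<circ> g')"
      by auto
    then have kn: "k = k'" "n = n'" by auto
    have "g i = g' i" if "i < n" for i
    proof (rule inj_onD[OF e])
      show "e (g i) = e (g' i)"
        using word_code_inj[OF q codes[unfolded kn(2)[symmetric]] that] by simp
      show "g i \<in> J" "g' i \<in> J" using w kn that by (auto simp: words_def PiE_iff)
    qed
    then have "g = g'"
      using w kn by (intro extensionalityI[where A="{..<n}"]) (auto simp: words_def PiE_iff)
    then show "x = y" using kn by (simp add: xy)
  qed
  then show ?thesis by blast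
qed

lemma has_sum_reindex_extend:
  fixes H :: "'i \<Rightarrow> real"
  assumes inj: "inj_on cd I" and hs: "(H has_sum s) I"
  shows "((\<lambda>j. if j \<in> cd ` I then H (inv_into I cd j) else 0) has_sum s) UNIV"
proof -
  let ?g = "\<lambda>j. if j \<in> cd ` I then H (inv_into I cd j) else 0"
  have "((?g \<circ> cd) has_sum s) I"
    using hs by (subst has_sum_cong[where g=H]) (auto simp: inv_into_f_f[OF inj])
  then have "(?g has_sum s) (cd ` I)" using has_sum_reindex[OF inj] by blast
  then show ?thesis by (subst (asm) has_sum_cong_neutral[where T=UNIV]) auto
qed

text \<open>A family of real-valued coordinates \<open>G x\<close> on an index set \<open>I\<close> whose squared distances
  \<open>S x y\<close> are two-sided comparable to \<open>\<rho>\<^sup>2\<close> yields a bi-Lipschitz embedding into \<open>\<ell>\<^sub>2\<close> of any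
  index type containing \<open>I\<close>; subtracting the coordinates of a base point makes each image
  square summable.\<close>
lemma bilipschitz_into_ell2_from_sums:
  fixes G :: "'a \<Rightarrow> 'i \<Rightarrow> real" and cd :: "'i \<Rightarrow> 'j"
  assumes inj: "inj_on cd I"
    and sums: "\<And>x y. x \<in> X \<Longrightarrow> y \<in> X \<Longrightarrow> ((\<lambda>i. (G x i - G y i)\<^sup>2) has_sum S x y) I"
    and lower: "\<And>x y. x \<in> X \<Longrightarrow> y \<in> X \<Longrightarrow> c * \<rho> x y \<le> sqrt (S x y)"
    and upper: "\<And>x y. x \<in> X \<Longrightarrow> y \<in> X \<Longrightarrow> sqrt (S x y) \<le> C * \<rho> x y"
    and "c > 0"
  shows "\<exists>f :: 'a \<Rightarrow> 'j \<Rightarrow> real. bilipschitz_into_ell2 X \<rho> f"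
proof -
  define x0 where "x0 = (SOME x. x \<in> X)"
  define f where
    "f x j = (if j \<in> cd ` I then G x (inv_into I cd j) - G x0 (inv_into I cd j) else 0)" for x j
  have f_sums: "((\<lambda>j. (f x j - f y j)\<^sup>2) has_sum S x y) UNIV" if "x \<in> X" "y \<in> X" for x y
  proof -
    have "(f x j - f y j)\<^sup>2 = (if j \<in> cd ` I
            then (G x (inv_into I cd j) - G y (inv_into I cd j))\<^sup>2 else 0)" for j
      by (simp add: f_def)
    then show ?thesis using has_sum_reindex_extend[OF inj sums[OF that]] by simp
  qed
  have "f x \<in> ell2" if "x \<in> X" for x
  proof -
    have "x0 \<in> X" unfolding x0_def using that by (rule someI)
    moreover have "f x0 j = 0" for j by (simp add: f_def)
    ultimately show ?thesis
      using has_sum_imp_summable[OF f_sums[OF that \<open>x0 \<in> X\<close>]] by (simp add: ell2_def)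
  qed
  moreover have "\<forall>x\<in>X. \<forall>y\<in>X. c * \<rho> x y \<le> ell2_dist (f x) (f y) \<and> ell2_dist (f x) (f y) \<le> C * \<rho> x y"
  proof (intro ballI)
    fix x y assume "x \<in> X" "y \<in> X"
    then have "ell2_dist (f x) (f y) = sqrt (S x y)"
      using f_sums by (simp add: ell2_dist_def infsumI)
    then show "c * \<rho> x y \<le> ell2_dist (f x) (f y) \<and> ell2_dist (f x) (f y) \<le> C * \<rho> x y"
      using lower upper \<open>x \<in> X\<close> \<open>y \<in> X\<close> by simp
  qed
  ultimately have "bilipschitz_into_ell2 X \<rho> f"
    unfolding bilipschitz_into_ell2_def using \<open>c > 0\<close> by blast
  then show ?thesis by blast
qed

section \<open>Normalising a threshold embedding at dyadic scales\<close>

lemma lip_norm_bound: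
  assumes met: "metric_on X d" and lip: "lipschitz_wrt X d f" and x: "x \<in> X" and y: "y \<in> X"
  shows "dist (f x) (f y) \<le> lip_norm X d f * d x y"
proof -
  define S where "S = {C. 0 \<le> C \<and> (\<forall>x\<in>X. \<forall>y\<in>X. dist (f x) (f y) \<le> C * d x y)}"
  have dnn: "\<And>x y. x \<in> X \<Longrightarrow> y \<in> X \<Longrightarrow> 0 \<le> d x y" using met by (auto simp: metric_on_def)
  obtain C where C: "\<forall>x\<in>X. \<forall>y\<in>X. dist (f x) (f y) \<le> C * d x y"
    using lip by (auto simp: lipschitz_wrt_def)
  have "dist (f x) (f y) \<le> max C 0 * d x y" if "x \<in> X" "y \<in> X" for x y
    using C that dnn[OF that] by (smt (verit) mult_right_mono max.cobounded1)
  then have "max C 0 \<in> S" by (auto simp: S_def)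
  show ?thesis
  proof (cases "d x y = 0")
    case True
    then have "x = y" using met x y by (auto simp: metric_on_def)
    then show ?thesis using True by simp
  next
    case False
    then have dp: "d x y > 0" using dnn[OF x y] by simp
    have "dist (f x) (f y) / d x y \<le> Inf S"
    proof (rule cInf_greatest)
      show "S \<noteq> {}" using \<open>max C 0 \<in> S\<close> by blast
      fix c assume "c \<in> S"
      then have "dist (f x) (f y) \<le> c * d x y" using x y by (auto simp: S_def)
      then show "dist (f x) (f y) / d x y \<le> c" using dp by (simp add: divide_le_eq)
    qed
    then show ?thesis using dp by (simp add: lip_norm_def S_def[symmetric] divide_le_eq)
  qed
qed

lemma dyadic_normalisation:
  fixes \<phi> :: "real \<Rightarrow> 'a \<Rightarrow> 'b::real_normed_vector"
  assumes met: "metric_on X d" and th: "threshold_embeds_K X d K \<phi>"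
  obtains \<psi> :: "int \<Rightarrow> 'a \<Rightarrow> 'b" where
    "\<And>k x y. x \<in> X \<Longrightarrow> y \<in> X \<Longrightarrow> norm (\<psi> k x - \<psi> k y) \<le> d x y"
    "\<And>k x y. x \<in> X \<Longrightarrow> y \<in> X \<Longrightarrow> 2 powr k \<le> d x y \<Longrightarrow> 2 powr k / K \<le> norm (\<psi> k x - \<psi> k y)"
proof
  define L where "L k = lip_norm X d (\<phi> (2 powr k))" for k :: int
  define \<psi> where "\<psi> k x = (1 / L k) *\<^sub>R \<phi> (2 powr k) x" for k :: int and x
  have L: "lipschitz_wrt X d (\<phi> (2 powr k))" "L k > 0"
    and sep: "\<And>x y. x \<in> X \<Longrightarrow> y \<in> X \<Longrightarrow> d x y \<ge> 2 powr k \<Longrightarrow>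
                dist (\<phi> (2 powr k) x) (\<phi> (2 powr k) y) \<ge> L k * 2 powr k / K" for k
    using th by (auto simp: threshold_embeds_K_def L_def)
  have \<psi>_dist: "norm (\<psi> k x - \<psi> k y) = dist (\<phi> (2 powr k) x) (\<phi> (2 powr k) y) / L k" for k x y
    using L(2)[of k] by (simp add: \<psi>_def dist_norm scaleR_diff_right[symmetric])
  show "norm (\<psi> k x - \<psi> k y) \<le> d x y" if "x \<in> X" "y \<in> X" for k x y
    using lip_norm_bound[OF met L(1) that] L(2)[of k]
    by (simp add: \<psi>_dist L_def divide_le_eq mult.commute)
  show "2 powr k / K \<le> norm (\<psi> k x - \<psi> k y)" if "x \<in> X" "y \<in> X" "2 powr k \<le> d x y" for k x y
    using sep[OF that] L(2)[of k] by (simp add: \<psi>_dist le_divide_eq mult.commute)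
qed

lemma snowflake_square:
  assumes "d x y \<ge> 0"
  shows "(snowflake d \<theta> x y)\<^sup>2 = d x y powr (2 * \<theta>)"
  using assms by (simp add: snowflake_def power2_eq_square powr_add[symmetric])

section \<open>The snowflake construction\<close>

locale snowflake_construction =
  fixes X :: "'a set" and d :: "'a \<Rightarrow> 'a \<Rightarrow> real" and \<epsilon> K :: real
    and \<psi> :: "int \<Rightarrow> 'a \<Rightarrow> 'h::{real_inner, complete_space}" and B :: "'h set"
  assumes met: "metric_on X d" and eps: "0 < \<epsilon>" "\<epsilon> < 1" and K: "K > 0"
    and max: "maximal_orthonormal B"
    and \<psi>_lip: "\<And>k x y. x \<in> X \<Longrightarrow> y \<in> X \<Longrightarrow> norm (\<psi> k x - \<psi> k y) \<le> d x y"
    and \<psi>_sep: "\<And>k x y. x \<in> X \<Longrightarrow> y \<in> X \<Longrightarrow> 2 powr k \<le> d x y \<Longrightarrow>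
                 2 powr k / K \<le> norm (\<psi> k x - \<psi> k y)"
begin

definition seen :: "'h set" where
  "seen = {b\<in>B. \<exists>k. \<exists>x\<in>X. inner (\<psi> k x) b \<noteq> 0}"

definition scaled_coeffs :: "int \<Rightarrow> 'a \<Rightarrow> 'h \<Rightarrow> real" where
  "scaled_coeffs k x = (\<lambda>b. inner (\<psi> k x) b / 2 powr k)"

definition feature :: "'a \<Rightarrow> int \<times> nat \<times> (nat \<Rightarrow> 'h) \<Rightarrow> real" where
  "feature x = (\<lambda>(k, p). 2 powr (k * (1 - \<epsilon>)) * gauss_feature seen (scaled_coeffs k x) p)"

definition level_sq_dist :: "'a \<Rightarrow> 'a \<Rightarrow> int \<Rightarrow> real" where
  "level_sq_dist x y k = 2 powr (2 * (1 - \<epsilon>) * k) * gauss_gap ((norm (\<psi> k x - \<psi> k y) / 2 powr k)\<^sup>2)"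

text \<open>The comparison constants: \<open>C_lower d^(2(1-\<epsilon>)) \<le> |feature x - feature y|^2 \<le> C_upper d^(2(1-\<epsilon>))\<close>.\<close>
definition C_upper :: real where
  "C_upper = 2 / (1 - 2 powr (- (2 * (1 - \<epsilon>)))) + 1 / (1 - 2 powr (- (2 * \<epsilon>)))"

definition C_lower :: real where
  "C_lower = 2 powr (- (2 - 2 * \<epsilon>)) * gauss_gap (1 / K\<^sup>2)"

lemma B_orthonormal: "orthonormal_set B"
  using max by (simp add: maximal_orthonormal_def)

lemma scaled_coeffs_sq_summable: "(\<lambda>b. (scaled_coeffs k x b)\<^sup>2) summable_on seen"
proof -
  have "(\<lambda>b. (inner (\<psi> k x) b)\<^sup>2 * (1 / (2 powr k)\<^sup>2)) summable_on B"
    by (rule summable_on_cmult_left[OF coeff_sq_summable[OF B_orthonormal]])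
  then have "(\<lambda>b. (scaled_coeffs k x b)\<^sup>2) summable_on B"
    by (simp add: scaled_coeffs_def power_divide)
  then show ?thesis by (rule summable_on_subset_banach) (auto simp: seen_def)
qed

text \<open>Parseval, restricted to the basis vectors that are used.\<close>
lemma scaled_coeffs_dist:
  assumes "x \<in> X" "y \<in> X"
  shows "infsum (\<lambda>b. (scaled_coeffs k x b - scaled_coeffs k y b)\<^sup>2) seen = (norm (\<psi> k x - \<psi> k y) / 2 powr k)\<^sup>2"
proof -
  define u where "u = \<psi> k x - \<psi> k y"
  have "inner u b = 0" if "b \<in> B - seen" for b
    using that assms by (auto simp: seen_def u_def inner_diff_left)
  then have "((\<lambda>b. (inner u b)\<^sup>2) has_sum (norm u)\<^sup>2) seen"
    using parseval[OF max, of u] by (subst has_sum_cong_neutral[where T=B]) (auto simp: seen_def)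
  from has_sum_cmult_left[OF this, of "1 / (2 powr k)\<^sup>2"]
  have "((\<lambda>b. (inner u b / 2 powr k)\<^sup>2) has_sum (norm u / 2 powr k)\<^sup>2) seen"
    by (simp add: power_divide)
  moreover have "scaled_coeffs k x b - scaled_coeffs k y b = inner u b / 2 powr k" for b
    by (simp add: scaled_coeffs_def u_def inner_diff_left diff_divide_distrib)
  ultimately show ?thesis by (simp add: infsumI u_def)
qed

lemma level_has_sum:
  assumes "x \<in> X" "y \<in> X"
  shows "((\<lambda>p. (feature x (k, p) - feature y (k, p))\<^sup>2) has_sum level_sq_dist x y k) (words seen)"
proof -
  have "((\<lambda>p. (gauss_feature seen (scaled_coeffs k x) p - gauss_feature seen (scaled_coeffs k y) p)\<^sup>2)
          has_sum gauss_gap ((norm (\<psi> k x - \<psi> k y) / 2 powr k)\<^sup>2)) (words seen)"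
    using gauss_feature_dist_has_sum[OF scaled_coeffs_sq_summable[of k x] scaled_coeffs_sq_summable[of k y]]
    by (simp add: scaled_coeffs_dist[OF assms])
  from has_sum_cmult_right[OF this, where c="(2 powr (k * (1 - \<epsilon>)))\<^sup>2"]
  have "((\<lambda>p. (2 powr (k * (1 - \<epsilon>)) * gauss_feature seen (scaled_coeffs k x) p
              - 2 powr (k * (1 - \<epsilon>)) * gauss_feature seen (scaled_coeffs k y) p)\<^sup>2)
          has_sum (2 powr (k * (1 - \<epsilon>)))\<^sup>2 * gauss_gap ((norm (\<psi> k x - \<psi> k y) / 2 powr k)\<^sup>2))
          (words seen)"
    by (simp add: power_mult_distrib right_diff_distrib[symmetric])
  moreover have "(2 powr (k * (1 - \<epsilon>)))\<^sup>2 = 2 powr (2 * (1 - \<epsilon>) * k)"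
    by (simp add: power2_eq_square powr_add[symmetric] algebra_simps)
  ultimately show ?thesis by (simp add: feature_def level_sq_dist_def)
qed

text \<open>Each level contributes at most \<open>2 \<cdot> 2^(2(1-\<epsilon>)k)\<close> (saturation) and at most \<open>d^2 \<cdot> 2^(-2\<epsilon>k)\<close>
  (since \<open>\<psi>\<^sub>k\<close> is 1-Lipschitz).\<close>
lemma level_upper_bounds:
  assumes "x \<in> X" "y \<in> X"
  shows "0 \<le> level_sq_dist x y k" "level_sq_dist x y k \<le> 2 * 2 powr (2 * (1 - \<epsilon>) * k)"
    and "level_sq_dist x y k \<le> (d x y)\<^sup>2 * 2 powr (- (2 * \<epsilon>) * k)"
proof -
  define D where "D = (norm (\<psi> k x - \<psi> k y) / 2 powr k)\<^sup>2"
  have lsd: "level_sq_dist x y k = 2 powr (2 * (1 - \<epsilon>) * k) * gauss_gap D"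
    by (simp add: level_sq_dist_def D_def)
  show "0 \<le> level_sq_dist x y k" unfolding lsd by (simp add: gauss_gap_nonneg D_def)
  show "level_sq_dist x y k \<le> 2 * 2 powr (2 * (1 - \<epsilon>) * k)"
    unfolding lsd using gauss_gap_le_two[of D] by simp
  have "D \<le> (d x y / 2 powr k)\<^sup>2"
    unfolding D_def using \<psi>_lip[OF assms, of k] by (intro power_mono divide_right_mono) auto
  then have "level_sq_dist x y k \<le> 2 powr (2 * (1 - \<epsilon>) * k) * (d x y / 2 powr k)\<^sup>2"
    unfolding lsd using gauss_gap_le[of D] by (intro mult_left_mono) auto
  also have "\<dots> = (d x y)\<^sup>2 * (2 powr (2 * (1 - \<epsilon>) * k) / 2 powr (2 * k))"
    by (simp add: power_divide power2_eq_square powr_add[symmetric])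
  also have "2 powr (2 * (1 - \<epsilon>) * k) / 2 powr (2 * k) = 2 powr (- (2 * \<epsilon>) * k)"
    by (simp add: powr_diff[symmetric] algebra_simps)
  finally show "level_sq_dist x y k \<le> (d x y)\<^sup>2 * 2 powr (- (2 * \<epsilon>) * k)" .
qed

text \<open>At the scale \<open>2^m \<le> d x y < 2^(m+1)\<close>, the separation property of \<open>\<psi>_m\<close> gives a
  contribution of order \<open>d^(2(1-\<epsilon>))\<close>.\<close>
lemma level_lower_bound:
  fixes m :: int
  assumes "x \<in> X" "y \<in> X" "2 powr m \<le> d x y" "d x y < 2 powr (m + 1)"
  shows "C_lower * d x y powr (2 - 2 * \<epsilon>) \<le> level_sq_dist x y m"
proof -
  have "1 / K\<^sup>2 = (2 powr m / K / 2 powr m)\<^sup>2"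
    by (simp add: power_divide)
  also have "\<dots> \<le> (norm (\<psi> m x - \<psi> m y) / 2 powr m)\<^sup>2"
    using \<psi>_sep[OF assms(1-3)] K by (intro power_mono divide_right_mono) auto
  finally have gap: "gauss_gap (1 / K\<^sup>2) \<le> gauss_gap ((norm (\<psi> m x - \<psi> m y) / 2 powr m)\<^sup>2)"
    by (rule gauss_gap_mono)
  have "d x y powr (2 - 2 * \<epsilon>) \<le> (2 powr (m + 1)) powr (2 - 2 * \<epsilon>)"
    using eps assms(3,4) by (intro powr_mono2) (auto intro: order_trans[OF _ assms(3)])
  also have "\<dots> = 2 powr (2 - 2 * \<epsilon>) * 2 powr (2 * (1 - \<epsilon>) * m)"
    by (simp add: powr_powr powr_add[symmetric] algebra_simps)
  finally have "2 powr (- (2 - 2 * \<epsilon>)) * d x y powr (2 - 2 * \<epsilon>)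
      \<le> 2 powr (- (2 - 2 * \<epsilon>)) * (2 powr (2 - 2 * \<epsilon>) * 2 powr (2 * (1 - \<epsilon>) * m))"
    by (rule mult_left_mono) simp
  also have "\<dots> = 2 powr (2 * (1 - \<epsilon>) * m)"
    by (simp add: mult.assoc[symmetric] powr_add[symmetric])
  finally have scale: "2 powr (- (2 - 2 * \<epsilon>)) * d x y powr (2 - 2 * \<epsilon>) \<le> 2 powr (2 * (1 - \<epsilon>) * m)" .
  have "C_lower * d x y powr (2 - 2 * \<epsilon>)
      = (2 powr (- (2 - 2 * \<epsilon>)) * d x y powr (2 - 2 * \<epsilon>)) * gauss_gap (1 / K\<^sup>2)"
    by (simp add: C_lower_def)
  also have "\<dots> \<le> level_sq_dist x y m"
    unfolding level_sq_dist_def using scale gap K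
    by (intro mult_mono) (auto intro: gauss_gap_nonneg)
  finally show ?thesis .
qed

lemma C_lower_pos: "C_lower > 0"
  using K by (simp add: C_lower_def gauss_gap_pos)

lemma total_sq_dist:
  assumes "x \<in> X" "y \<in> X"
  shows "level_sq_dist x y summable_on UNIV"
    and "C_lower * d x y powr (2 - 2 * \<epsilon>) \<le> infsum (level_sq_dist x y) UNIV"
    and "infsum (level_sq_dist x y) UNIV \<le> C_upper * d x y powr (2 - 2 * \<epsilon>)"
proof -
  have d: "d x y \<ge> 0" "d x y = 0 \<longleftrightarrow> x = y" using met assms by (auto simp: metric_on_def)
  have "level_sq_dist x y summable_on UNIV \<and>
      C_lower * d x y powr (2 - 2 * \<epsilon>) \<le> infsum (level_sq_dist x y) UNIV \<and>
      infsum (level_sq_dist x y) UNIV \<le> C_upper * d x y powr (2 - 2 * \<epsilon>)"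
  proof (cases "x = y")
    case True
    then have "level_sq_dist x y = (\<lambda>_. 0)" by (simp add: fun_eq_iff level_sq_dist_def gauss_gap_def)
    then show ?thesis using d True by simp
  next
    case False
    then have dpos: "d x y > 0" using d by auto
    note bounds = dyadic_sum_bound[where \<alpha>="2 * (1 - \<epsilon>)" and \<beta>="2 * \<epsilon>",
        OF _ _ _ dpos level_upper_bounds[OF assms]]
    obtain m :: int where m: "2 powr m \<le> d x y" "d x y < 2 powr (m + 1)"
      using dyadic_bracket[OF dpos] .
    have sums: "level_sq_dist x y summable_on UNIV" using bounds(1) eps by simp
    have "C_lower * d x y powr (2 - 2 * \<epsilon>) \<le> level_sq_dist x y m"
      by (rule level_lower_bound[OF assms m])
    also have "\<dots> \<le> infsum (level_sq_dist x y) UNIV"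
      using sum_le_has_sum[OF sums[unfolded summable_iff_has_sum_infsum], of "{m}"]
        level_upper_bounds(1)[OF assms] by simp
    finally show ?thesis
      using sums bounds(2) eps by (simp add: C_upper_def algebra_simps)
  qed
  then show "level_sq_dist x y summable_on UNIV"
    "C_lower * d x y powr (2 - 2 * \<epsilon>) \<le> infsum (level_sq_dist x y) UNIV"
    "infsum (level_sq_dist x y) UNIV \<le> C_upper * d x y powr (2 - 2 * \<epsilon>)" by auto
qed

lemma feature_has_sum:
  assumes "x \<in> X" "y \<in> X"
  shows "((\<lambda>i. (feature x i - feature y i)\<^sup>2) has_sum infsum (level_sq_dist x y) UNIV)
           (UNIV \<times> words seen)"
proof -
  have levels: "((\<lambda>p. (feature x (k, p) - feature y (k, p))\<^sup>2) has_sum level_sq_dist x y k) (words seen)"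
    for k using level_has_sum[OF assms] .
  have "(\<lambda>i. (feature x i - feature y i)\<^sup>2) summable_on UNIV \<times> words seen"
    by (rule summable_on_SigmaI[OF levels total_sq_dist(1)[OF assms]]) auto
  then show ?thesis
    using has_sum_SigmaI[OF levels total_sq_dist(1)[OF assms, unfolded summable_iff_has_sum_infsum]]
    by simp
qed

text \<open>The snowflake embedding: re-index the coordinates \<open>feature x\<close> by \<open>'a \<times> nat\<close>.\<close>
theorem snowflake_embedding:
  "\<exists>f :: 'a \<Rightarrow> ('a \<times> nat \<Rightarrow> real). bilipschitz_into_ell2 X (snowflake d (1 - \<epsilon>)) f"
proof -
  obtain e :: "'h \<Rightarrow> 'a \<times> nat" where "inj_on e seen"
    using seen_basis_encoding[OF B_orthonormal, of X \<psi>] unfolding seen_def by blast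
  then obtain cd :: "int \<times> nat \<times> (nat \<Rightarrow> 'h) \<Rightarrow> 'a \<times> nat" where cd: "inj_on cd (UNIV \<times> words seen)"
    using words_encoding by blast
  have sf: "(snowflake d (1 - \<epsilon>) x y)\<^sup>2 = d x y powr (2 - 2 * \<epsilon>)" if "x \<in> X" "y \<in> X" for x y
    using snowflake_square[of d x y] met that by (auto simp: metric_on_def algebra_simps)
  have sf_nonneg: "snowflake d (1 - \<epsilon>) x y \<ge> 0" for x y by (simp add: snowflake_def)
  show ?thesis
  proof (rule bilipschitz_into_ell2_from_sums[OF cd feature_has_sum])
    fix x y assume "x \<in> X" "y \<in> X"
    show "sqrt C_lower * snowflake d (1 - \<epsilon>) x y \<le> sqrt (infsum (level_sq_dist x y) UNIV)"
      using total_sq_dist(2)[OF \<open>x \<in> X\<close> \<open>y \<in> X\<close>] C_lower_pos sf_nonneg[of x y]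
      by (simp add: real_le_rsqrt real_sqrt_mult sf[OF \<open>x \<in> X\<close> \<open>y \<in> X\<close>] power_mult_distrib)
    have "sqrt (infsum (level_sq_dist x y) UNIV) \<le> sqrt (C_upper * (snowflake d (1 - \<epsilon>) x y)\<^sup>2)"
      using total_sq_dist(3)[OF \<open>x \<in> X\<close> \<open>y \<in> X\<close>] sf[OF \<open>x \<in> X\<close> \<open>y \<in> X\<close>] by simp
    also have "\<dots> = sqrt C_upper * snowflake d (1 - \<epsilon>) x y"
      using sf_nonneg[of x y] by (simp add: real_sqrt_mult)
    finally show "sqrt (infsum (level_sq_dist x y) UNIV) \<le> sqrt C_upper * snowflake d (1 - \<epsilon>) x y" .
  qed (use C_lower_pos in auto)
qed

end

theorem lemma5p2:
  fixes X :: "'a set" and d :: "'a \<Rightarrow> 'a \<Rightarrow> real" and \<epsilon> :: real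
  assumes "metric_on X d"
    and "threshold_embeds X d TYPE('h::{real_inner, complete_space})"
    and "0 < \<epsilon>" and "\<epsilon> < 1"
  shows "\<exists>f :: 'a \<Rightarrow> ('a \<times> nat \<Rightarrow> real). bilipschitz_into_ell2 X (snowflake d (1 - \<epsilon>)) f"
proof -
  obtain K and \<phi> :: "real \<Rightarrow> 'a \<Rightarrow> 'h" where K: "K > 0" and th: "threshold_embeds_K X d K \<phi>"
    using assms(2) by (auto simp: threshold_embeds_def)
  obtain \<psi> :: "int \<Rightarrow> 'a \<Rightarrow> 'h" where
    \<psi>_lip: "\<And>k x y. x \<in> X \<Longrightarrow> y \<in> X \<Longrightarrow> norm (\<psi> k x - \<psi> k y) \<le> d x y" and
    \<psi>_sep: "\<And>k x y. x \<in> X \<Longrightarrow> y \<in> X \<Longrightarrow> 2 powr k \<le> d x y \<Longrightarrow> 2 powr k / K \<le> norm (\<psi> k x - \<psi> k y)"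
    using dyadic_normalisation[OF assms(1) th] by blast
  obtain B :: "'h set" where "maximal_orthonormal B"
    using maximal_orthonormal_exists by blast
  then interpret snowflake_construction X d \<epsilon> K \<psi> B
    using assms(1,3,4) K \<psi>_lip \<psi>_sep by unfold_locales auto
  show ?thesis by (rule snowflake_embedding)
qed

end
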